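(* Let $X=\{x_1,\dots,x_n\}$ be a finite set of alternatives, let $k\ge 1$ be an integer, let $\mathcal{B}=\{B_1,\dots,B_m\}$ be a collection of non-empty subsets of $X$ and let $\bm{c}$ be a choice function on $\mathcal{B}$ (i.e. $\bm{c}(B_i)\in B_i$). Write $b_i=|B_i|$. Then $(\mathcal{B},\bm{c})$ is rationalizable with $k^{th}$-order choice under limited attention if and only if there exist real numbers $u_1,\dots,u_n>0$ (one for each alternative), binary numbers $\delta_{ij}\in\{0,1\}$ ($i=1,\dots,m$, $j=1,\dots,n$), and a constant $M>0$ (the "big-$M$", taken arbitrarily large, so that a constraint with a term $(1-\delta_{ij})M$ is void when $\delta_{ij}=0$) such that: (1) for every $i$ and every $x_j\in B_i$ with $x_j\neq \bm{c}(B_i)$, writing $\bm{c}(B_i)=x_l$: $u_l> u_j-(1-\delta_{ij})M$; (2) $\delta_{ij}=0$ whenever $x_j\notin B_i$; (3) for all $i,j$ with $\bm{c}(B_i)\ne\bm{c}(B_j)$ and $\bm{c}(B_i),\bm{c}(B_j)\in B_i\cap B_j$: $\sum_{x_l\in B_i\setminus B_j}\delta_{il}+\sum_{x_l\in B_j\setminus B_i}\delta_{jl}\ge 1$; (4) for every $i$: $\sum_{x_j\in B_i}\delta_{ij}\ge\min\{k,b_i\}$.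
   Context: A strict preference relation on $X$ is a complete, transitive and asymmetric binary relation $\succ$. An attention filter is a map $\Gamma$ from non-empty subsets of $X$ to subsets of $X$ such that $\Gamma(B)\subseteq B$ for every $B$, and $\Gamma(B)=\Gamma(B\setminus\{x\})$ for every $B$ and every $x\in B\setminus\Gamma(B)$. A data set $(\mathcal{B},\bm{c})$ is rationalizable with $k^{th}$-order choice under limited attention if there exist a strict preference relation $\succ$ and an attention filter $\Gamma$ with $|\Gamma(B)|\ge\min\{|B|,k\}$ for all non-empty $B\subseteq X$, such that for every $B\in\mathcal{B}$, $\bm{c}(B)$ is the $\succ$-maximal element of $\Gamma(B)$. (Intended interpretation: $\delta_{ij}=1$ iff $x_j\in\Gamma(B_i)$, and $u_j$ is a utility of $x_j$.) *)

theory Defs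
  imports Complex_Main
begin

definition strict_preference :: "'a set \<Rightarrow> ('a \<times> 'a) set \<Rightarrow> bool" where
  "strict_preference X R \<longleftrightarrow>
     R \<subseteq> X \<times> X \<and>
     (\<forall>x\<in>X. \<forall>y\<in>X. x \<noteq> y \<longrightarrow> (x, y) \<in> R \<or> (y, x) \<in> R) \<and>
     trans R \<and>
     (\<forall>x y. (x, y) \<in> R \<longrightarrow> (y, x) \<notin> R)"

text \<open>An attention filter on the non-empty subsets of X.  (The guard
  B - {x} nonempty only avoids applying Gamma to the empty set, on which it is undefined.)\<close>
definition attention_filter :: "'a set \<Rightarrow> ('a set \<Rightarrow> 'a set) \<Rightarrow> bool" where
  "attention_filter X \<Gamma> \<longleftrightarrow>
     (\<forall>B. B \<subseteq> X \<and> B \<noteq> {} \<longrightarrow>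
        \<Gamma> B \<subseteq> B \<and>
        (\<forall>x \<in> B - \<Gamma> B. B - {x} \<noteq> {} \<longrightarrow> \<Gamma> B = \<Gamma> (B - {x})))"

definition is_max_in :: "('a \<times> 'a) set \<Rightarrow> 'a set \<Rightarrow> 'a \<Rightarrow> bool" where
  "is_max_in R A a \<longleftrightarrow> a \<in> A \<and> (\<forall>y\<in>A. y \<noteq> a \<longrightarrow> (a, y) \<in> R)"

definition rationalizable_kLA ::
  "nat \<Rightarrow> 'a set \<Rightarrow> 'a set set \<Rightarrow> ('a set \<Rightarrow> 'a) \<Rightarrow> bool" where
  "rationalizable_kLA k X \<B> c \<longleftrightarrow>
     (\<exists>R \<Gamma>. strict_preference X R \<and> attention_filter X \<Gamma> \<and>
        (\<forall>B. B \<subseteq> X \<and> B \<noteq> {} \<longrightarrow> card (\<Gamma> B) \<ge> min (card B) k) \<and>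
        (\<forall>B\<in>\<B>. is_max_in R (\<Gamma> B) (c B)))"

end

theory Submission
  imports Defs
begin

text \<open>Both sides are equivalent to the existence of a strict preference R together with
  consideration sets D B \<subseteq> B, one per observed menu, such that c B is the R-best element
  of D B, card (D B) \<ge> min (card B) k, and any two menus each containing the other's
  consideration set have the same choice.
  Given a rationalization, take D = \<Gamma>: removing unattended alternatives does not change an
  attention filter, so \<Gamma> B = \<Gamma> (B \<inter> B') = \<Gamma> B' for two such menus.  Conversely, the
  attention filter maps S to the alternatives of S not better than c B whenever some observed
  B satisfies D B \<subseteq> S \<subseteq> B, and to S itself otherwise.
  The big-M program encodes consideration sets by \<delta> B x = [x \<in> D B]: constraint (1) says
  that c B beats every attended alternative, and (3) is the consistency condition read
  contrapositively.  A utility is obtained from R by counting worse alternatives, and R from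
  a utility by breaking ties along an injection into the naturals.\<close>

lemma attention_filter_subset:
  "attention_filter X \<Gamma> \<Longrightarrow> S \<subseteq> X \<Longrightarrow> S \<noteq> {} \<Longrightarrow> \<Gamma> S \<subseteq> S"
  unfolding attention_filter_def by blast

lemma attention_filter_Diff_singleton:
  assumes "attention_filter X \<Gamma>" "S \<subseteq> X" "x \<in> S - \<Gamma> S" "S - {x} \<noteq> {}"
  shows "\<Gamma> (S - {x}) = \<Gamma> S"
proof -
  have "S \<subseteq> X \<and> S \<noteq> {} \<longrightarrow> (\<forall>x \<in> S - \<Gamma> S. S - {x} \<noteq> {} \<longrightarrow> \<Gamma> S = \<Gamma> (S - {x}))"
    using assms(1) unfolding attention_filter_def by blast
  then show ?thesis
    using assms(2-4) by blast
qed

lemma attention_filter_Diff_unattended: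
  assumes af: "attention_filter X \<Gamma>" and "finite D"
  shows "S \<subseteq> X \<Longrightarrow> \<Gamma> S \<noteq> {} \<Longrightarrow> \<Gamma> S \<inter> D = {} \<Longrightarrow> D \<subseteq> S \<Longrightarrow> \<Gamma> (S - D) = \<Gamma> S"
  using \<open>finite D\<close>
proof (induction D arbitrary: S)
  case empty
  then show ?case by simp
next
  case (insert x D)
  have "\<Gamma> S \<subseteq> S - {x}"
    using attention_filter_subset[OF af] insert.prems by blast
  then have remove_x: "\<Gamma> (S - {x}) = \<Gamma> S"
    using attention_filter_Diff_singleton[OF af] insert.prems by blast
  have "\<Gamma> (S - {x} - D) = \<Gamma> (S - {x})"
    using insert.IH[of "S - {x}"] insert.hyps(2) insert.prems remove_x by auto
  then show ?case
    using remove_x by (simp add: set_diff_eq)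
qed

lemma attention_filter_eq_if_between:
  assumes "attention_filter X \<Gamma>" "finite S" "S \<subseteq> X" "\<Gamma> S \<noteq> {}" "\<Gamma> S \<subseteq> T" "T \<subseteq> S"
  shows "\<Gamma> T = \<Gamma> S"
proof -
  have "S - (S - T) = T"
    using assms(6) by blast
  then show ?thesis
    using attention_filter_Diff_unattended[of X \<Gamma> "S - T" S] assms by auto
qed

lemma attention_filter_eq_if_attention_in_Int:
  assumes af: "attention_filter X \<Gamma>" and "finite B" "finite B'" "B \<subseteq> X" "B' \<subseteq> X"
    and "\<Gamma> B \<noteq> {}" "\<Gamma> B' \<noteq> {}" "\<Gamma> B \<subseteq> B \<inter> B'" "\<Gamma> B' \<subseteq> B \<inter> B'"
  shows "\<Gamma> B = \<Gamma> B'"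
proof -
  have "\<Gamma> (B \<inter> B') = \<Gamma> B"
    by (rule attention_filter_eq_if_between[OF af]) (use assms in auto)
  moreover have "\<Gamma> (B \<inter> B') = \<Gamma> B'"
    by (rule attention_filter_eq_if_between[OF af]) (use assms in auto)
  ultimately show ?thesis
    by simp
qed

lemma strict_preference_asym:
  assumes "strict_preference X R" "(x, y) \<in> R"
  shows "(y, x) \<notin> R"
  using assms unfolding strict_preference_def by simp

lemma is_max_in_unique:
  assumes "\<And>x y. (x, y) \<in> R \<Longrightarrow> (y, x) \<notin> R" "is_max_in R A a" "is_max_in R A b"
  shows "a = b"
proof (rule ccontr)
  assume "a \<noteq> b"
  then have "(a, b) \<in> R" "(b, a) \<in> R"
    using assms(2,3) unfolding is_max_in_def by auto
  then show False
    using assms(1) by blast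
qed

lemma strict_preference_card_worse_less:
  assumes pref: "strict_preference X R" and "finite X" and xy: "(x, y) \<in> R"
  shows "card {z\<in>X. (y, z) \<in> R} < card {z\<in>X. (x, z) \<in> R}"
proof (rule psubset_card_mono)
  have "y \<in> X" "(y, y) \<notin> R"
    using pref xy strict_preference_asym[OF pref] unfolding strict_preference_def by blast+
  moreover have "{z\<in>X. (y, z) \<in> R} \<subseteq> {z\<in>X. (x, z) \<in> R}"
    using pref xy unfolding strict_preference_def by (auto dest: transD)
  ultimately show "{z\<in>X. (y, z) \<in> R} \<subset> {z\<in>X. (x, z) \<in> R}"
    using xy by blast
qed (use \<open>finite X\<close> in simp)

definition lex_preference :: "'a set \<Rightarrow> ('a \<Rightarrow> 'b::linorder) \<Rightarrow> ('a \<Rightarrow> 'c::linorder) \<Rightarrow> ('a \<times> 'a) set"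
  where "lex_preference X u f = {(x, y). x \<in> X \<and> y \<in> X \<and> (u y < u x \<or> u x = u y \<and> f x < f y)}"

lemma strict_preference_lex_preference:
  assumes "inj_on f X"
  shows "strict_preference X (lex_preference X u f)"
  unfolding strict_preference_def
proof (intro conjI ballI impI)
  fix x y assume "x \<in> X" "y \<in> X" "x \<noteq> y"
  then have "f x \<noteq> f y"
    using assms by (meson inj_onD)
  then show "(x, y) \<in> lex_preference X u f \<or> (y, x) \<in> lex_preference X u f"
    using \<open>x \<in> X\<close> \<open>y \<in> X\<close> unfolding lex_preference_def by (auto simp: neq_iff)
qed (auto simp: lex_preference_def trans_def)

lemma sum_zero_one_eq_card:
  fixes g :: "'a \<Rightarrow> 'b::semiring_1"
  assumes "finite A" "\<forall>x\<in>A. g x \<in> {0, 1}"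
  shows "(\<Sum>x\<in>A. g x) = of_nat (card {x\<in>A. g x = 1})"
proof -
  have "(\<Sum>x\<in>A. g x) = (\<Sum>x\<in>A. of_bool (g x = 1))"
    using assms(2) by (intro sum.cong) auto
  also have "\<dots> = of_nat (card {x\<in>A. g x = 1})"
    using assms(1) by (simp add: Collect_conj_eq Int_commute)
  finally show ?thesis .
qed

locale consideration_sets =
  fixes R :: "('a \<times> 'a) set" and \<B> :: "'a set set"
    and c :: "'a set \<Rightarrow> 'a" and D :: "'a set \<Rightarrow> 'a set"
  assumes consideration_subset: "B \<in> \<B> \<Longrightarrow> D B \<subseteq> B"
    and is_max_in_consideration: "B \<in> \<B> \<Longrightarrow> is_max_in R (D B) (c B)"
    and choice_consistent: "B \<in> \<B> \<Longrightarrow> B' \<in> \<B> \<Longrightarrow> D B \<subseteq> B' \<Longrightarrow> D B' \<subseteq> B \<Longrightarrow> c B = c B'"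
begin

definition frames :: "'a set \<Rightarrow> 'a set set"
  where "frames S = {B\<in>\<B>. D B \<subseteq> S \<and> S \<subseteq> B}"

definition frame_choice :: "'a set \<Rightarrow> 'a"
  where "frame_choice S = c (SOME B. B \<in> frames S)"

definition attention :: "'a set \<Rightarrow> 'a set"
  where "attention S =
    (if frames S = {} then S else {y\<in>S. y = frame_choice S \<or> (frame_choice S, y) \<in> R})"

lemma frame_choice_eq:
  assumes "B \<in> frames S"
  shows "frame_choice S = c B"
proof -
  define B\<^sub>0 where "B\<^sub>0 = (SOME B. B \<in> frames S)"
  have "B\<^sub>0 \<in> frames S"
    unfolding B\<^sub>0_def using assms by (rule someI)
  then have "c B\<^sub>0 = c B"
    using assms unfolding frames_def by (blast intro: choice_consistent)
  then show ?thesis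
    unfolding frame_choice_def B\<^sub>0_def .
qed

lemma consideration_subset_attention:
  assumes "B \<in> frames S"
  shows "D B \<subseteq> attention S"
  using assms is_max_in_consideration frame_choice_eq[OF assms]
  unfolding attention_def frames_def is_max_in_def by auto

lemma attention_filter_attention: "attention_filter X attention"
  unfolding attention_filter_def
proof (intro allI impI conjI ballI)
  fix S x
  show "attention S \<subseteq> S"
    unfolding attention_def by auto
  assume x: "x \<in> S - attention S"
  then obtain B where B: "B \<in> frames S"
    unfolding attention_def by (auto split: if_splits)
  moreover have "B \<in> frames (S - {x})"
    using x B consideration_subset_attention[OF B] unfolding frames_def by auto
  ultimately have "frames S \<noteq> {}" "frames (S - {x}) \<noteq> {}"
    "frame_choice (S - {x}) = frame_choice S"
    using frame_choice_eq by auto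
  then show "attention S = attention (S - {x})"
    using x unfolding attention_def by auto
qed

lemma card_attention:
  assumes "finite S" and \<B>: "\<forall>B\<in>\<B>. finite B \<and> min (card B) k \<le> card (D B)"
  shows "min (card S) k \<le> card (attention S)"
proof (cases "frames S = {}")
  case True
  then show ?thesis
    unfolding attention_def by simp
next
  case False
  then obtain B where B: "B \<in> frames S"
    by blast
  then have "card S \<le> card B"
    using \<B> unfolding frames_def by (auto intro: card_mono)
  also have "min (card B) k \<le> card (D B)"
    using \<B> B unfolding frames_def by blast
  also have "\<dots> \<le> card (attention S)"
    using consideration_subset_attention[OF B] \<open>finite S\<close>
    by (intro card_mono) (auto simp: attention_def)
  finally show ?thesis
    by linarith
qed

lemma is_max_in_attention:
  assumes "B \<in> \<B>"
  shows "is_max_in R (attention B) (c B)"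
proof -
  have "B \<in> frames B"
    using assms consideration_subset unfolding frames_def by blast
  moreover have "c B \<in> B"
    using assms consideration_subset is_max_in_consideration unfolding is_max_in_def by blast
  ultimately show ?thesis
    unfolding attention_def is_max_in_def frame_choice_eq[OF \<open>B \<in> frames B\<close>] by auto
qed

end

lemma rationalizable_kLA_if_consideration_sets:
  assumes "finite X" "\<forall>B\<in>\<B>. B \<subseteq> X" "strict_preference X R" "consideration_sets R \<B> c D"
    and card_D: "\<forall>B\<in>\<B>. min (card B) k \<le> card (D B)"
  shows "rationalizable_kLA k X \<B> c"
proof -
  interpret consideration_sets R \<B> c D
    by fact
  have "\<forall>B\<in>\<B>. finite B \<and> min (card B) k \<le> card (D B)"
    using assms finite_subset by blast
  then have "\<forall>S. S \<subseteq> X \<and> S \<noteq> {} \<longrightarrow> min (card S) k \<le> card (attention S)"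
    using card_attention \<open>finite X\<close> finite_subset by blast
  then show ?thesis
    unfolding rationalizable_kLA_def
    using assms(3) attention_filter_attention is_max_in_attention by blast
qed

lemma consideration_sets_if_rationalizable_kLA:
  assumes "finite X" and \<B>: "\<forall>B\<in>\<B>. B \<noteq> {} \<and> B \<subseteq> X" and "rationalizable_kLA k X \<B> c"
  shows "\<exists>R D. strict_preference X R \<and> consideration_sets R \<B> c D \<and>
    (\<forall>B\<in>\<B>. min (card B) k \<le> card (D B))"
proof -
  obtain R \<Gamma> where pref: "strict_preference X R" and af: "attention_filter X \<Gamma>"
    and card_\<Gamma>: "\<forall>B. B \<subseteq> X \<and> B \<noteq> {} \<longrightarrow> min (card B) k \<le> card (\<Gamma> B)"
    and max: "\<forall>B\<in>\<B>. is_max_in R (\<Gamma> B) (c B)"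
    using assms(3) unfolding rationalizable_kLA_def by blast
  have \<Gamma>_subset: "\<Gamma> B \<subseteq> B" if "B \<in> \<B>" for B
    using attention_filter_subset[OF af] \<B> that by blast
  have \<Gamma>_nonempty: "\<Gamma> B \<noteq> {}" if "B \<in> \<B>" for B
    using max that unfolding is_max_in_def by blast
  have finite_B: "finite B" if "B \<in> \<B>" for B
    using \<B> that \<open>finite X\<close> finite_subset by blast
  have "consideration_sets R \<B> c \<Gamma>"
  proof
    fix B B' assume B: "B \<in> \<B>" "B' \<in> \<B>" and "\<Gamma> B \<subseteq> B'" "\<Gamma> B' \<subseteq> B"
    then have "\<Gamma> B = \<Gamma> B'"
      using \<Gamma>_subset \<B> by (intro attention_filter_eq_if_attention_in_Int[OF af]
          finite_B \<Gamma>_nonempty) blast+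
    then show "c B = c B'"
      using is_max_in_unique[OF strict_preference_asym[OF pref]] max B by metis
  qed (use \<Gamma>_subset max in auto)
  then show ?thesis
    using pref card_\<Gamma> \<B> by blast
qed

definition big_M_feasible ::
  "nat \<Rightarrow> 'a set \<Rightarrow> 'a set set \<Rightarrow> ('a set \<Rightarrow> 'a) \<Rightarrow> ('a \<Rightarrow> real) \<Rightarrow> ('a set \<Rightarrow> 'a \<Rightarrow> int) \<Rightarrow> real \<Rightarrow> bool"
  where "big_M_feasible k X \<B> c u \<delta> M \<longleftrightarrow>
    (\<forall>x\<in>X. u x > 0) \<and> M > 0 \<and>
    (\<forall>B\<in>\<B>. \<forall>x\<in>X. \<delta> B x \<in> {0, 1}) \<and>
    (\<forall>B\<in>\<B>. \<forall>x\<in>B. x \<noteq> c B \<longrightarrow> u (c B) > u x - (1 - of_int (\<delta> B x)) * M) \<and>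
    (\<forall>B\<in>\<B>. \<forall>x\<in>X. x \<notin> B \<longrightarrow> \<delta> B x = 0) \<and>
    (\<forall>B\<in>\<B>. \<forall>B'\<in>\<B>. c B \<noteq> c B' \<and> c B \<in> B \<inter> B' \<and> c B' \<in> B \<inter> B' \<longrightarrow>
       (\<Sum>x\<in>B - B'. \<delta> B x) + (\<Sum>x\<in>B' - B. \<delta> B' x) \<ge> 1) \<and>
    (\<forall>B\<in>\<B>. (\<Sum>x\<in>B. \<delta> B x) \<ge> int (min k (card B)))"

lemma big_M_feasible_if_consideration_sets:
  assumes "finite X" and \<B>: "\<forall>B\<in>\<B>. B \<subseteq> X" and pref: "strict_preference X R"
    and D: "consideration_sets R \<B> c D" and card_D: "\<forall>B\<in>\<B>. min (card B) k \<le> card (D B)"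
  shows "\<exists>u \<delta> M. big_M_feasible k X \<B> c u \<delta> M"
proof -
  interpret consideration_sets R \<B> c D
    by (fact D)
  define u where "u x = real (card {y\<in>X. (x, y) \<in> R}) + 1" for x
  define \<delta> :: "'a set \<Rightarrow> 'a \<Rightarrow> int" where "\<delta> B x = of_bool (x \<in> D B)" for B x
  define M where "M = real (card X) + 1"
  have u_bounds: "1 \<le> u x" "u x \<le> M" for x
    using \<open>finite X\<close> card_mono[of X "{y\<in>X. (x, y) \<in> R}"] unfolding u_def M_def by auto
  have finite_B: "finite B" if "B \<in> \<B>" for B
    using \<B> that \<open>finite X\<close> finite_subset by blast
  have sum_\<delta>: "(\<Sum>x\<in>A. \<delta> B x) = int (card (A \<inter> D B))" if "finite A" for A B
    using that unfolding \<delta>_def by simp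
  have choice_beats: "u (c B) > u x - (1 - of_int (\<delta> B x)) * M" if "B \<in> \<B>" "x \<in> B" "x \<noteq> c B" for B x
  proof (cases "x \<in> D B")
    case True
    then have "(c B, x) \<in> R"
      using is_max_in_consideration[OF \<open>B \<in> \<B>\<close>] \<open>x \<noteq> c B\<close> unfolding is_max_in_def by blast
    then show ?thesis
      using strict_preference_card_worse_less[OF pref \<open>finite X\<close>] True
      unfolding u_def \<delta>_def by simp
  next
    case False
    then show ?thesis
      using u_bounds[of x] u_bounds[of "c B"] unfolding \<delta>_def by simp
  qed
  have distinct_choices: "(\<Sum>x\<in>B - B'. \<delta> B x) + (\<Sum>x\<in>B' - B. \<delta> B' x) \<ge> 1"
    if "B \<in> \<B>" "B' \<in> \<B>" "c B \<noteq> c B'" for B B'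
  proof -
    have "(B - B') \<inter> D B \<noteq> {} \<or> (B' - B) \<inter> D B' \<noteq> {}"
      using choice_consistent[OF that(1,2)] consideration_subset that by blast
    then have "card ((B - B') \<inter> D B) + card ((B' - B) \<inter> D B') \<ge> 1"
      using finite_B that by (auto simp: Suc_le_eq card_gt_0_iff)
    then show ?thesis
      using finite_B that by (simp add: sum_\<delta>)
  qed
  have card_bound: "(\<Sum>x\<in>B. \<delta> B x) \<ge> int (min k (card B))" if "B \<in> \<B>" for B
  proof -
    have "B \<inter> D B = D B"
      using consideration_subset[OF that] by blast
    then show ?thesis
      using card_D finite_B that by (simp add: sum_\<delta> min.commute)
  qed
  have "big_M_feasible k X \<B> c u \<delta> M"
    unfolding big_M_feasible_def
  proof (intro conjI ballI impI)
    show "u x > 0" for x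
      using u_bounds(1)[of x] by linarith
    show "M > 0"
      unfolding M_def by simp
    show "\<delta> B x \<in> {0, 1}" for B x
      unfolding \<delta>_def by simp
    show "\<delta> B x = 0" if "B \<in> \<B>" "x \<notin> B" for B x
      using consideration_subset that unfolding \<delta>_def by auto
  qed (use choice_beats distinct_choices card_bound in blast)+
  then show ?thesis
    by blast
qed

lemma consideration_sets_if_big_M_feasible:
  assumes "finite X" and \<B>: "\<forall>B\<in>\<B>. B \<subseteq> X" and c: "\<forall>B\<in>\<B>. c B \<in> B"
    and feasible: "big_M_feasible k X \<B> c u \<delta> M"
  shows "\<exists>R D. strict_preference X R \<and> consideration_sets R \<B> c D \<and>
    (\<forall>B\<in>\<B>. min (card B) k \<le> card (D B))"
proof -
  have \<delta>_01: "\<forall>B\<in>\<B>. \<forall>x\<in>X. \<delta> B x \<in> {0, 1}"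
    and beats: "\<forall>B\<in>\<B>. \<forall>x\<in>B. x \<noteq> c B \<longrightarrow> u (c B) > u x - (1 - of_int (\<delta> B x)) * M"
    and separates: "\<forall>B\<in>\<B>. \<forall>B'\<in>\<B>. c B \<noteq> c B' \<and> c B \<in> B \<inter> B' \<and> c B' \<in> B \<inter> B' \<longrightarrow>
       (\<Sum>x\<in>B - B'. \<delta> B x) + (\<Sum>x\<in>B' - B. \<delta> B' x) \<ge> 1"
    and covers: "\<forall>B\<in>\<B>. (\<Sum>x\<in>B. \<delta> B x) \<ge> int (min k (card B))"
    using feasible unfolding big_M_feasible_def by simp_all
  obtain f :: "'a \<Rightarrow> nat" where "inj_on f X"
    using finite_imp_inj_to_nat_seg[OF \<open>finite X\<close>] by blast
  define R where "R = lex_preference X u f"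
  define D where "D B = insert (c B) {x\<in>B. \<delta> B x = 1}" for B
  have finite_B: "finite B" if "B \<in> \<B>" for B
    using \<B> that \<open>finite X\<close> finite_subset by blast
  have sum_\<delta>: "(\<Sum>x\<in>A. \<delta> B x) = int (card {x\<in>A. \<delta> B x = 1})" if "B \<in> \<B>" "A \<subseteq> B" for A B
  proof (rule sum_zero_one_eq_card)
    show "finite A"
      using finite_B that finite_subset by blast
    show "\<forall>x\<in>A. \<delta> B x \<in> {0, 1}"
      using \<delta>_01 \<B> that by blast
  qed
  have "consideration_sets R \<B> c D"
  proof
    fix B assume B: "B \<in> \<B>"
    show "D B \<subseteq> B"
      using B c unfolding D_def by blast
    have "(c B, x) \<in> R" if "x \<in> B" "\<delta> B x = 1" "x \<noteq> c B" for x
    proof -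
      have "u (c B) > u x - (1 - of_int (\<delta> B x)) * M"
        using beats B that by blast
      then have "u x < u (c B)"
        using \<open>\<delta> B x = 1\<close> by simp
      moreover have "x \<in> X" "c B \<in> X"
        using \<B> B c that by blast+
      ultimately show ?thesis
        unfolding R_def lex_preference_def by simp
    qed
    then show "is_max_in R (D B) (c B)"
      unfolding is_max_in_def D_def by blast
  next
    fix B B' assume B: "B \<in> \<B>" "B' \<in> \<B>" and "D B \<subseteq> B'" "D B' \<subseteq> B"
    then have "{x\<in>B - B'. \<delta> B x = 1} = {}" "{x\<in>B' - B. \<delta> B' x = 1} = {}"
      unfolding D_def by blast+
    then have "(\<Sum>x\<in>B - B'. \<delta> B x) = 0" "(\<Sum>x\<in>B' - B. \<delta> B' x) = 0"
      using sum_\<delta>[of B "B - B'"] sum_\<delta>[of B' "B' - B"] B by (simp_all del: Collect_empty_eq)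
    moreover have "c B \<in> B \<inter> B'" "c B' \<in> B \<inter> B'"
      using B c \<open>D B \<subseteq> B'\<close> \<open>D B' \<subseteq> B\<close> unfolding D_def by blast+
    ultimately show "c B = c B'"
      using separates B by force
  qed
  moreover have "min (card B) k \<le> card (D B)" if "B \<in> \<B>" for B
  proof -
    have "int (min k (card B)) \<le> (\<Sum>x\<in>B. \<delta> B x)"
      using covers that by blast
    also have "\<dots> = int (card {x\<in>B. \<delta> B x = 1})"
      using sum_\<delta>[OF that subset_refl] .
    finally have "min k (card B) \<le> card {x\<in>B. \<delta> B x = 1}"
      by simp
    also have "card {x\<in>B. \<delta> B x = 1} \<le> card (D B)"
      using finite_B[OF that] unfolding D_def by (intro card_mono) auto
    finally show ?thesis
      by (simp add: min.commute)
  qed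
  ultimately show ?thesis
    using strict_preference_lex_preference[OF \<open>inj_on f X\<close>] unfolding R_def by blast
qed

theorem theorem2:
  fixes X :: "'a set" and k :: nat and \<B> :: "'a set set" and c :: "'a set \<Rightarrow> 'a"
  assumes "finite X"
    and "k \<ge> 1"
    and "\<forall>B\<in>\<B>. B \<noteq> {} \<and> B \<subseteq> X"
    and "\<forall>B\<in>\<B>. c B \<in> B"
  shows "rationalizable_kLA k X \<B> c \<longleftrightarrow>
    (\<exists>(u :: 'a \<Rightarrow> real) (\<delta> :: 'a set \<Rightarrow> 'a \<Rightarrow> int) (M :: real).
       (\<forall>x\<in>X. u x > 0) \<and> M > 0 \<and>
       (\<forall>B\<in>\<B>. \<forall>x\<in>X. \<delta> B x \<in> {0, 1}) \<and>
       (\<forall>B\<in>\<B>. \<forall>x\<in>B. x \<noteq> c B \<longrightarrow> u (c B) > u x - (1 - of_int (\<delta> B x)) * M) \<and>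
       (\<forall>B\<in>\<B>. \<forall>x\<in>X. x \<notin> B \<longrightarrow> \<delta> B x = 0) \<and>
       (\<forall>B\<in>\<B>. \<forall>B'\<in>\<B>. c B \<noteq> c B' \<and> c B \<in> B \<inter> B' \<and> c B' \<in> B \<inter> B' \<longrightarrow>
          (\<Sum>x\<in>B - B'. \<delta> B x) + (\<Sum>x\<in>B' - B. \<delta> B' x) \<ge> 1) \<and>
       (\<forall>B\<in>\<B>. (\<Sum>x\<in>B. \<delta> B x) \<ge> int (min k (card B))))"
proof -
  have \<B>: "\<forall>B\<in>\<B>. B \<subseteq> X"
    using assms(3) by blast
  have "rationalizable_kLA k X \<B> c \<longleftrightarrow>
    (\<exists>R D. strict_preference X R \<and> consideration_sets R \<B> c D \<and>
      (\<forall>B\<in>\<B>. min (card B) k \<le> card (D B)))"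
    using consideration_sets_if_rationalizable_kLA[OF assms(1,3)]
      rationalizable_kLA_if_consideration_sets[OF assms(1) \<B>] by blast
  also have "\<dots> \<longleftrightarrow> (\<exists>u \<delta> M. big_M_feasible k X \<B> c u \<delta> M)"
    using big_M_feasible_if_consideration_sets[OF assms(1) \<B>]
      consideration_sets_if_big_M_feasible[OF assms(1) \<B> assms(4)] by blast
  finally show ?thesis
    unfolding big_M_feasible_def .
qed

end
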